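(* Let $(X,d,G)$ be a $G$-system, $\{F_n\}$ a Følner sequence of $G$, and $Z$ a nonempty subset of $X$. Then: (1) if $\overline{\mathrm{mdim}}_M(G,Z,\{F_n\},d)=\infty$, then $\overline{D}_M(G,Z,\{F_n\},d)\ge1$; (2) if $\overline{\mathrm{mdim}}_M(G,Z,\{F_n\},d)<\infty$, then $0\le\overline{D}_M(G,Z,\{F_n\},d)\le1$; (3) if $0<\overline{\mathrm{mdim}}_M(G,Z,\{F_n\},d)<\infty$, then $\overline{D}_M(G,Z,\{F_n\},d)=1$.
   Context: $G$ is a countably infinite discrete amenable group; $(X,d,G)$ a compact metric space with continuous $G$-action by homeomorphisms; $\{F_n\}$ nonempty finite subsets of $G$ with $|gF_n\triangle F_n|/|F_n|\to0$ for all $g$. $d_F(x,y)=\max_{g\in F}d(gx,gy)$; $s(Z,d_F,\epsilon)$ is the maximal cardinality of a subset of $Z$ with pairwise $d_F$-distances $>\epsilon$; $h_{top}(G,Z,d,\{F_n\},\epsilon)=\limsup_n\frac1{|F_n|}\log s(Z,d_{F_n},\epsilon)$. For $s>0$, $\overline{\mathrm{mdim}}_M(G,Z,\{F_n\},s,d)=\limsup_{\epsilon\to0}h_{top}(G,Z,d,\{F_n\},\epsilon)/(\log\frac1\epsilon)^s$; $\overline{\mathrm{mdim}}_M(G,Z,\{F_n\},d)$ is the case $s=1$. The infinite upper entropy dimension is $\overline{D}_M(G,Z,\{F_n\},d)=\inf\{s>0:\overline{\mathrm{mdim}}_M(G,Z,\{F_n\},s,d)=0\}$. *)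

theory Defs
  imports "HOL-Analysis.Analysis" "HOL-Algebra.Coset"
begin

definition G_system :: "('g, 'b) monoid_scheme \<Rightarrow> ('g \<Rightarrow> 'x::metric_space \<Rightarrow> 'x) \<Rightarrow> 'x set \<Rightarrow> bool" where
  "G_system G T X \<longleftrightarrow> group G \<and> countable (carrier G) \<and> infinite (carrier G) \<and> compact X \<and>
     (\<forall>g\<in>carrier G. continuous_on X (T g) \<and> T g ` X \<subseteq> X) \<and>
     (\<forall>x\<in>X. T \<one>\<^bsub>G\<^esub> x = x) \<and>
     (\<forall>g\<in>carrier G. \<forall>h\<in>carrier G. \<forall>x\<in>X. T (g \<otimes>\<^bsub>G\<^esub> h) x = T g (T h x))"

definition Folner_seq :: "('g, 'b) monoid_scheme \<Rightarrow> (nat \<Rightarrow> 'g set) \<Rightarrow> bool" where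
  "Folner_seq G F \<longleftrightarrow> (\<forall>n. finite (F n) \<and> F n \<noteq> {} \<and> F n \<subseteq> carrier G) \<and>
     (\<forall>g\<in>carrier G. (\<lambda>n. real (card (((g <#\<^bsub>G\<^esub> F n) - F n) \<union> (F n - (g <#\<^bsub>G\<^esub> F n))))
                          / real (card (F n))) \<longlonglongrightarrow> 0)"

definition bowen_dist :: "('g \<Rightarrow> 'x::metric_space \<Rightarrow> 'x) \<Rightarrow> 'g set \<Rightarrow> 'x \<Rightarrow> 'x \<Rightarrow> real" where
  "bowen_dist T F x y = Max ((\<lambda>g. dist (T g x) (T g y)) ` F)"

definition separated :: "('g \<Rightarrow> 'x::metric_space \<Rightarrow> 'x) \<Rightarrow> 'g set \<Rightarrow> 'x set \<Rightarrow> real \<Rightarrow> 'x set \<Rightarrow> bool" where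
  "separated T F Z \<epsilon> E \<longleftrightarrow> E \<subseteq> Z \<and> finite E \<and>
     (\<forall>x\<in>E. \<forall>y\<in>E. x \<noteq> y \<longrightarrow> bowen_dist T F x y > \<epsilon>)"

definition sep_num :: "('g \<Rightarrow> 'x::metric_space \<Rightarrow> 'x) \<Rightarrow> 'g set \<Rightarrow> 'x set \<Rightarrow> real \<Rightarrow> nat" where
  "sep_num T F Z \<epsilon> = Sup {card E | E. separated T F Z \<epsilon> E}"

definition htop :: "('g \<Rightarrow> 'x::metric_space \<Rightarrow> 'x) \<Rightarrow> 'x set \<Rightarrow> (nat \<Rightarrow> 'g set) \<Rightarrow> real \<Rightarrow> ereal" where
  "htop T Z F \<epsilon> = limsup (\<lambda>n. ereal (ln (real (sep_num T (F n) Z \<epsilon>)) / real (card (F n))))"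

definition mdimM_s :: "('g \<Rightarrow> 'x::metric_space \<Rightarrow> 'x) \<Rightarrow> 'x set \<Rightarrow> (nat \<Rightarrow> 'g set) \<Rightarrow> real \<Rightarrow> ereal" where
  "mdimM_s T Z F s = Limsup (at_right 0) (\<lambda>\<epsilon>. htop T Z F \<epsilon> / ereal ((ln (1 / \<epsilon>)) powr s))"

definition mdimM :: "('g \<Rightarrow> 'x::metric_space \<Rightarrow> 'x) \<Rightarrow> 'x set \<Rightarrow> (nat \<Rightarrow> 'g set) \<Rightarrow> ereal" where
  "mdimM T Z F = mdimM_s T Z F 1"

text \<open>Infinite upper entropy dimension: inf {s>0 : mdim_M(s) = 0} (inf of empty set = \<infinity>).\<close>
definition DM :: "('g \<Rightarrow> 'x::metric_space \<Rightarrow> 'x) \<Rightarrow> 'x set \<Rightarrow> (nat \<Rightarrow> 'g set) \<Rightarrow> ereal" where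
  "DM T Z F = Inf {ereal s | s. s > 0 \<and> mdimM_s T Z F s = 0}"

end

theory Submission
  imports Defs "HOL-Real_Asymp.Real_Asymp"
begin

text \<open>With \<open>L \<epsilon> = log (1/\<epsilon>) \<rightarrow> \<infinity>\<close> as \<open>\<epsilon> \<rightarrow> 0\<close>, the quotient of order \<open>t\<close> factors as
  \<open>h(\<epsilon>) / L \<epsilon>^t = (h(\<epsilon>) / L \<epsilon>^s) \<cdot> L \<epsilon>^(s - t)\<close>. If the metric mean dimension of order \<open>s\<close> is
  finite and \<open>s < t\<close>, the first factor stays bounded while the second tends to \<open>0\<close>, so the mean
  dimension of order \<open>t\<close> vanishes. Hence the orders of vanishing form an up-set containing
  every \<open>t > 1\<close> when order \<open>1\<close> is finite, and no \<open>t < 1\<close> when order \<open>1\<close> is nonzero.\<close>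

lemma Limsup_mult_tendsto_zero:
  fixes f :: "'a \<Rightarrow> ereal" and g :: "'a \<Rightarrow> real"
  assumes "F \<noteq> bot" and f_bounded: "Limsup F f < \<infinity>"
    and f_nonneg: "eventually (\<lambda>x. 0 \<le> f x) F"
    and g_tendsto: "(g \<longlongrightarrow> 0) F" and g_nonneg: "eventually (\<lambda>x. 0 \<le> g x) F"
  shows "Limsup F (\<lambda>x. f x * ereal (g x)) = 0"
proof (rule antisym)
  have "0 \<le> Limsup F f"
    using \<open>F \<noteq> bot\<close> f_nonneg by (rule le_Limsup)
  with f_bounded obtain C :: real where C_bound: "Limsup F f < ereal C" and "0 < C"
    by (cases "Limsup F f") (auto intro!: that[of "real_of_ereal (Limsup F f) + 1"])
  have f_less: "eventually (\<lambda>x. f x < ereal C) F"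
    using C_bound by (rule Limsup_lessD)
  have "Limsup F (\<lambda>x. f x * ereal (g x)) \<le> ereal e" if "0 < e" for e
  proof (rule Limsup_bounded)
    have "eventually (\<lambda>x. g x < e / C) F"
      using g_tendsto \<open>0 < e\<close> \<open>0 < C\<close> by (intro order_tendstoD) auto
    then show "eventually (\<lambda>x. f x * ereal (g x) \<le> ereal e) F"
      using f_less f_nonneg g_nonneg
    proof eventually_elim
      case (elim x)
      then obtain r where "f x = ereal r" "0 \<le> r" "r \<le> C"
        by (cases "f x") auto
      then have "r * g x \<le> C * (e / C)"
        using elim by (intro mult_mono) auto
      then show ?case
        using \<open>f x = ereal r\<close> \<open>0 < C\<close> by simp
    qed
  qed
  then show "Limsup F (\<lambda>x. f x * ereal (g x)) \<le> 0"
    using ereal_le_epsilon2[of _ 0] by simp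
  have "eventually (\<lambda>x. 0 \<le> f x * ereal (g x)) F"
    using f_nonneg g_nonneg by eventually_elim simp
  with \<open>F \<noteq> bot\<close> show "0 \<le> Limsup F (\<lambda>x. f x * ereal (g x))"
    by (rule le_Limsup)
qed

lemma tendsto_ln_inverse_powr_at_right_0:
  assumes "a < 0"
  shows "((\<lambda>\<epsilon>::real. ln (1 / \<epsilon>) powr a) \<longlongrightarrow> 0) (at_right 0)"
proof -
  have "filterlim (\<lambda>\<epsilon>::real. ln (1 / \<epsilon>)) at_top (at_right 0)"
    by real_asymp
  moreover have "((\<lambda>x::real. x powr a) \<longlongrightarrow> 0) at_top"
    using assms by (intro tendsto_neg_powr filterlim_ident) auto
  ultimately show ?thesis
    using filterlim_compose by blast
qed

lemma eventually_ln_inverse_pos_at_right_0: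
  "eventually (\<lambda>\<epsilon>::real. 0 < ln (1 / \<epsilon>)) (at_right 0)"
  by real_asymp

lemma htop_nonneg: "0 \<le> htop T Z F \<epsilon>"
  unfolding htop_def
proof (intro le_Limsup always_eventually allI)
  fix n
  have "0 \<le> ln (real (sep_num T (F n) Z \<epsilon>))"
    by (cases "sep_num T (F n) Z \<epsilon> = 0") auto
  then show "0 \<le> ereal (ln (real (sep_num T (F n) Z \<epsilon>)) / real (card (F n)))"
    by simp
qed simp

lemma eventually_mdim_quotient_nonneg:
  "eventually (\<lambda>\<epsilon>. 0 \<le> htop T Z F \<epsilon> / ereal (ln (1 / \<epsilon>) powr s)) (at_right 0)"
  using eventually_ln_inverse_pos_at_right_0
  by eventually_elim (simp add: htop_nonneg ereal_divide_eq)

lemma mdimM_s_eq_0_above: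
  assumes finite: "mdimM_s T Z F s < \<infinity>" and "s < t"
  shows "mdimM_s T Z F t = 0"
proof -
  let ?q = "\<lambda>s \<epsilon>. htop T Z F \<epsilon> / ereal (ln (1 / \<epsilon>) powr s)"
  have "eventually (\<lambda>\<epsilon>. ?q t \<epsilon> = ?q s \<epsilon> * ereal (ln (1 / \<epsilon>) powr (s - t))) (at_right 0)"
    using eventually_ln_inverse_pos_at_right_0
  proof eventually_elim
    case (elim \<epsilon>)
    then show ?case
      using htop_nonneg[of T Z F \<epsilon>]
      by (cases "htop T Z F \<epsilon>") (auto simp: ereal_divide_eq powr_diff field_simps)
  qed
  then have "mdimM_s T Z F t = Limsup (at_right 0) (\<lambda>\<epsilon>. ?q s \<epsilon> * ereal (ln (1 / \<epsilon>) powr (s - t)))"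
    unfolding mdimM_s_def by (rule Limsup_eq)
  also have "\<dots> = 0"
    using finite \<open>s < t\<close> eventually_mdim_quotient_nonneg
    by (intro Limsup_mult_tendsto_zero tendsto_ln_inverse_powr_at_right_0)
      (auto simp: mdimM_s_def)
  finally show ?thesis .
qed

lemma DM_nonneg: "0 \<le> DM T Z F"
  unfolding DM_def by (rule Inf_greatest) auto

lemma le_DM_if_mdimM_s_nonzero:
  assumes "mdimM_s T Z F s \<noteq> 0"
  shows "ereal s \<le> DM T Z F"
  unfolding DM_def
proof (rule Inf_greatest)
  fix u assume "u \<in> {ereal t | t. t > 0 \<and> mdimM_s T Z F t = 0}"
  then obtain t where "u = ereal t" "mdimM_s T Z F t = 0"
    by blast
  then show "ereal s \<le> u"
    using assms mdimM_s_eq_0_above[of T Z F t s] by force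
qed

lemma DM_le_if_mdimM_s_finite:
  assumes "mdimM_s T Z F s < \<infinity>" and "0 \<le> s"
  shows "DM T Z F \<le> ereal s"
proof (rule ereal_le_epsilon2)
  fix e :: real assume "0 < e"
  then have "mdimM_s T Z F (s + e) = 0"
    using assms by (intro mdimM_s_eq_0_above) auto
  then show "DM T Z F \<le> ereal s + ereal e"
    unfolding DM_def using \<open>0 < e\<close> \<open>0 \<le> s\<close> by (intro Inf_lower) auto
qed

theorem theorem3p41:
  fixes G :: "('g, 'b) monoid_scheme" and T :: "'g \<Rightarrow> 'x::metric_space \<Rightarrow> 'x"
    and X Z :: "'x set" and F :: "nat \<Rightarrow> 'g set"
  assumes "G_system G T X" and "Folner_seq G F" and "Z \<subseteq> X" and "Z \<noteq> {}"
  shows "(mdimM T Z F = \<infinity> \<longrightarrow> DM T Z F \<ge> 1)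
    \<and> (mdimM T Z F < \<infinity> \<longrightarrow> 0 \<le> DM T Z F \<and> DM T Z F \<le> 1)
    \<and> (0 < mdimM T Z F \<and> mdimM T Z F < \<infinity> \<longrightarrow> DM T Z F = 1)"
proof -
  have lower: "1 \<le> DM T Z F" if "mdimM T Z F \<noteq> 0"
    using le_DM_if_mdimM_s_nonzero[of T Z F 1] that by (simp add: mdimM_def one_ereal_def)
  have upper: "DM T Z F \<le> 1" if "mdimM T Z F < \<infinity>"
    using DM_le_if_mdimM_s_finite[of T Z F 1] that by (simp add: mdimM_def one_ereal_def)
  show ?thesis
    using lower upper DM_nonneg[of T Z F] by (auto intro: antisym)
qed

end
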